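(* Consider the equality problem (E) and algorithm PIR2, and suppose the algorithm terminates at iteration $k^*$ because $\Delta^{k^*}=\nabla^{k^*}$ (with $J^{k^*}\neq\emptyset$). Let $L$ be the set of indices fixed at their lower bounds during iterations $k<k^*$ (i.e. the union of $L^k$ over iterations with $\nabla^k>\Delta^k$) together with $L^{k^*}$, and $U$ the analogous set for upper bounds. Define $\rho_j:=\phi_j'(l_j)+\mu^{k^*}a_j$ for $j\in L$, $\rho_j:=0$ for $j\notin L$, $\lambda_j:=-\phi_j'(u_j)-\mu^{k^*}a_j$ for $j\in U$, and $\lambda_j:=0$ for $j\notin U$. Then $\rho_j\ge0$ and $\lambda_j\ge0$ for all $j\in J$.
   Context: Let $J=\{1,\dots,n\}$. Problem (E): minimize $\sum_{j\in J}\phi_j(x_j)$ subject to $\sum_{j\in J}a_jx_j=b$, $l_j\le x_j\le u_j$ ($j\in J$), where each $\phi_j:\mathbb{R}\to\mathbb{R}$ is strictly convex and continuously differentiable with $\phi_j'$ a bijection of $\mathbb{R}$ onto $\mathbb{R}$, $a_j>0$, $-\infty<l_j<u_j<\infty$, and (E) has an optimal solution. Algorithm PIR2 for (E): set $J^1:=J$, $b^1:=b$, $k:=1$. At iteration $k$, let $(\hat{\mathbf{x}}^k,\mu^k)$ be the unique pair with $\phi_j'(\hat x_j^k)+\mu^ka_j=0$ for $j\in J^k$ and $\sum_{j\in J^k}a_j\hat x^k_j=b^k$ (the solution and multiplier of the problem restricted to $J^k$ with right-hand side $b^k$ and no bound constraints). Let $L^k:=\{j\in J^k:\hat x^k_j\le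 l_j\}$, $U^k:=\{j\in J^k:\hat x^k_j\ge u_j\}$, $\nabla^k:=\sum_{j\in L^k}a_j(l_j-\hat x_j^k)$, $\Delta^k:=\sum_{j\in U^k}a_j(\hat x_j^k-u_j)$. If $\Delta^k=\nabla^k$, stop ($k^*:=k$) and set $x_j=l_j$ on $L^k$, $x_j=u_j$ on $U^k$, $x_j=\hat x_j^k$ on the rest of $J^k$. If $\nabla^k>\Delta^k$, fix $x_j:=l_j$ for $j\in L^k$, set $J^{k+1}:=J^k\setminus L^k$, $b^{k+1}:=b^k-\sum_{j\in L^k}a_jl_j$. If $\nabla^k<\Delta^k$, fix $x_j:=u_j$ for $j\in U^k$, set $J^{k+1}:=J^k\setminus U^k$, $b^{k+1}:=b^k-\sum_{j\in U^k}a_ju_j$. If $J^{k+1}=\emptyset$ stop; otherwise increase $k$ by one and repeat. *)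

theory Defs
  imports "HOL-Analysis.Analysis"
begin

definition strictly_convex :: "(real \<Rightarrow> real) \<Rightarrow> bool" where
  "strictly_convex f \<longleftrightarrow> (\<forall>x y t. x \<noteq> y \<and> 0 < t \<and> t < 1 \<longrightarrow>
      f ((1 - t) * x + t * y) < (1 - t) * f x + t * f y)"

definition pir_mu :: "(nat \<Rightarrow> real \<Rightarrow> real) \<Rightarrow> (nat \<Rightarrow> real) \<Rightarrow> nat set \<Rightarrow> real \<Rightarrow> real" where
  "pir_mu dphi a Jk bk = (THE mu. \<exists>x. (\<forall>j\<in>Jk. dphi j (x j) + mu * a j = 0)
                                   \<and> (\<Sum>j\<in>Jk. a j * x j) = bk)"

definition pir_xhat :: "(nat \<Rightarrow> real \<Rightarrow> real) \<Rightarrow> (nat \<Rightarrow> real) \<Rightarrow> nat set \<Rightarrow> real \<Rightarrow> nat \<Rightarrow> real" where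
  "pir_xhat dphi a Jk bk j = (THE x. dphi j x + pir_mu dphi a Jk bk * a j = 0)"

definition pir_L where
  "pir_L dphi a l Jk bk = {j \<in> Jk. pir_xhat dphi a Jk bk j \<le> l j}"

definition pir_U where
  "pir_U dphi a u Jk bk = {j \<in> Jk. pir_xhat dphi a Jk bk j \<ge> u j}"

definition pir_nabla where
  "pir_nabla dphi a l Jk bk = (\<Sum>j\<in>pir_L dphi a l Jk bk. a j * (l j - pir_xhat dphi a Jk bk j))"

definition pir_Delta where
  "pir_Delta dphi a u Jk bk = (\<Sum>j\<in>pir_U dphi a u Jk bk. a j * (pir_xhat dphi a Jk bk j - u j))"

text \<open>State (J^{k+1}, b^{k+1}) of algorithm PIR2 (0-based: index k is iteration k+1 of
  the paper). Once the algorithm has stopped the state stays constant.\<close>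
primrec pir_state ::
  "(nat \<Rightarrow> real \<Rightarrow> real) \<Rightarrow> (nat \<Rightarrow> real) \<Rightarrow> (nat \<Rightarrow> real) \<Rightarrow> (nat \<Rightarrow> real)
   \<Rightarrow> nat set \<Rightarrow> real \<Rightarrow> nat \<Rightarrow> nat set \<times> real" where
  "pir_state dphi a l u J b 0 = (J, b)"
| "pir_state dphi a l u J b (Suc k) =
     (let (Jk, bk) = pir_state dphi a l u J b k;
          Lk = pir_L dphi a l Jk bk; Uk = pir_U dphi a u Jk bk;
          nk = pir_nabla dphi a l Jk bk; dk = pir_Delta dphi a u Jk bk
      in if Jk = {} then (Jk, bk)
         else if nk > dk then (Jk - Lk, bk - (\<Sum>j\<in>Lk. a j * l j))
         else if nk < dk then (Jk - Uk, bk - (\<Sum>j\<in>Uk. a j * u j))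
         else (Jk, bk))"

end

theory Submission
  imports Defs
begin

text \<open>For a multiplier m let x_j(m) solve phi_j'(x) + m a_j = 0 (\<open>stationary_point\<close>); it
  decreases strictly in m, hence so does G_K(m) = \<Sum>_{j\<in>K} a_j clamp_[l_j,u_j](x_j(m))
  (\<open>clamped_sum\<close>). At the relaxed multiplier mu^k one has G_{J^k}(mu^k) = b^k + nabla^k - Delta^k,
  so G_{J^k*}(mu^k*) = b^k*. Going backwards through the iterations, suppose
  G_{J^(k+1)}(mu^k*) = b^(k+1). If nabla^k > Delta^k, then G_{J^k \<setminus> L^k}(mu^k) exceeds
  b^(k+1) = G_{J^k \<setminus> L^k}(mu^k*), so mu^k < mu^k*; the indices of L^k therefore stay clamped at
  their lower bounds under mu^k*, which gives G_{J^k}(mu^k*) = b^k. Symmetrically mu^k > mu^k*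
  when nabla^k < Delta^k. Finally j \<in> L^k means x_j(mu^k) \<le> l_j, i.e. phi_j'(l_j) + mu^k a_j \<ge> 0,
  and raising mu^k to mu^k* keeps the sign; likewise for U^k.\<close>

lemma strictly_convex_imp_convex_on:
  assumes "strictly_convex f"
  shows "convex_on UNIV f"
proof (rule convex_onI)
  fix t x y :: real
  assume "0 < t" "t < 1"
  show "f ((1 - t) *\<^sub>R x + t *\<^sub>R y) \<le> (1 - t) * f x + t * f y"
  proof (cases "x = y")
    case False
    then have "f ((1 - t) * x + t * y) < (1 - t) * f x + t * f y"
      using assms \<open>0 < t\<close> \<open>t < 1\<close> unfolding strictly_convex_def by blast
    then show ?thesis by simp
  qed (simp add: algebra_simps)
qed simp

lemma strictly_convex_imp_strict_mono_deriv:
  assumes "strictly_convex f" and "\<And>x. (f has_real_derivative f' x) (at x)" and "inj f'"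
  shows "strict_mono f'"
proof (rule strict_monoI)
  fix x y :: real
  assume "x < y"
  have cvx: "convex_on UNIV f"
    using assms(1) by (rule strictly_convex_imp_convex_on)
  have "f' x * (y - x) \<le> f y - f x" "f' y * (x - y) \<le> f x - f y"
    by (rule convex_on_imp_above_tangent[OF cvx]; simp add: assms(2))+
  moreover have "f' y * (x - y) = - (f' y * (y - x))"
    by (simp add: algebra_simps)
  ultimately have "f' x * (y - x) \<le> f' y * (y - x)"
    by linarith
  then have "f' x \<le> f' y"
    using \<open>x < y\<close> by simp
  moreover have "f' x \<noteq> f' y"
    using \<open>x < y\<close> \<open>inj f'\<close> by (auto dest: injD)
  ultimately show "f' x < f' y" by simp
qed

locale pir2_problem =
  fixes dphi :: "nat \<Rightarrow> real \<Rightarrow> real" and a l u :: "nat \<Rightarrow> real"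
    and J :: "nat set" and b :: real
  assumes finite_J: "finite J"
    and strict_mono_dphi: "\<And>j. j \<in> J \<Longrightarrow> strict_mono (dphi j)"
    and surj_dphi: "\<And>j. j \<in> J \<Longrightarrow> surj (dphi j)"
    and continuous_dphi: "\<And>j. j \<in> J \<Longrightarrow> continuous_on UNIV (dphi j)"
    and a_pos: "\<And>j. j \<in> J \<Longrightarrow> 0 < a j"
    and l_less_u: "\<And>j. j \<in> J \<Longrightarrow> l j < u j"
begin

definition stationary_point :: "nat \<Rightarrow> real \<Rightarrow> real" where
  "stationary_point j m = inv (dphi j) (- m * a j)"

lemma dphi_stationary_point: "j \<in> J \<Longrightarrow> dphi j (stationary_point j m) = - m * a j"
  unfolding stationary_point_def by (simp add: surj_dphi surj_f_inv_f)

lemma stationary_point_unique: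
  assumes "j \<in> J" and "dphi j x + m * a j = 0"
  shows "x = stationary_point j m"
proof -
  have "dphi j x = dphi j (stationary_point j m)"
    using assms(2) by (simp add: dphi_stationary_point[OF assms(1)] eq_neg_iff_add_eq_0)
  then show ?thesis
    using strict_mono_eq[OF strict_mono_dphi[OF assms(1)]] by blast
qed

lemma stationary_point_le_iff:
  assumes "j \<in> J"
  shows "stationary_point j m \<le> x \<longleftrightarrow> - m * a j \<le> dphi j x"
  using strict_mono_less_eq[OF strict_mono_dphi[OF assms], of "stationary_point j m" x]
  by (simp add: dphi_stationary_point[OF assms])

lemma le_stationary_point_iff:
  assumes "j \<in> J"
  shows "x \<le> stationary_point j m \<longleftrightarrow> dphi j x \<le> - m * a j"
  using strict_mono_less_eq[OF strict_mono_dphi[OF assms], of x "stationary_point j m"]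
  by (simp add: dphi_stationary_point[OF assms])

lemma stationary_point_strict_antimono:
  assumes "j \<in> J" and "m < m'"
  shows "stationary_point j m' < stationary_point j m"
proof -
  have "m * a j < m' * a j"
    using assms a_pos by simp
  then show ?thesis
    using stationary_point_le_iff[OF assms(1), of m "stationary_point j m'"]
      dphi_stationary_point[OF assms(1), of m'] by linarith
qed

lemma stationary_point_antimono:
  "j \<in> J \<Longrightarrow> m \<le> m' \<Longrightarrow> stationary_point j m' \<le> stationary_point j m"
  using stationary_point_strict_antimono[of j m m'] by (cases "m = m'") auto

lemma isCont_stationary_point:
  assumes "j \<in> J"
  shows "isCont (stationary_point j) m"
proof -
  obtain x where x: "- m * a j = dphi j x"
    using surj_dphi[OF assms] by (rule surjE)
  have inj: "inj (dphi j)"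
    using strict_mono_dphi[OF assms] by (rule strict_mono_imp_inj_on)
  have cont: "isCont (dphi j) z" for z
    using continuous_dphi[OF assms] by (simp add: continuous_on_eq_continuous_at)
  have "isCont (inv (dphi j)) (dphi j x)"
    by (rule isCont_inverse_function[where d=1]) (simp_all add: inj cont)
  then have "isCont (inv (dphi j)) (- m * a j)"
    unfolding x .
  then show ?thesis
    unfolding stationary_point_def[abs_def] by (rule isCont_o2[rotated]) simp
qed

lemma weighted_stationary_sum_strict_antimono:
  assumes "K \<subseteq> J" "K \<noteq> {}" "m < m'"
  shows "(\<Sum>j\<in>K. a j * stationary_point j m') < (\<Sum>j\<in>K. a j * stationary_point j m)"
  using assms finite_subset[OF assms(1) finite_J] a_pos stationary_point_strict_antimono
  by (intro sum_strict_mono) auto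

text \<open>Brackets for the intermediate value theorem: the constant point c = bb / \<Sum>_{j\<in>K} a_j
  meets the constraint, and the extreme values of -phi_j'(c)/a_j are multipliers that push every
  x_j to one side of c.\<close>
lemma weighted_stationary_sum_surj:
  assumes K: "K \<subseteq> J" "K \<noteq> {}"
  shows "\<exists>m. (\<Sum>j\<in>K. a j * stationary_point j m) = bb"
proof -
  have fin: "finite K" using finite_subset[OF K(1) finite_J] .
  define h where "h m = (\<Sum>j\<in>K. a j * stationary_point j m)" for m
  define c where "c = bb / (\<Sum>j\<in>K. a j)"
  define ms where "ms = (\<lambda>j. - dphi j c / a j) ` K"
  have "0 < (\<Sum>j\<in>K. a j)"
    using K fin a_pos by (intro sum_pos) auto
  then have sum_c: "(\<Sum>j\<in>K. a j * c) = bb"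
    unfolding c_def sum_distrib_right[symmetric] by simp
  have ms: "finite ms" "ms \<noteq> {}"
    unfolding ms_def using fin K by auto
  have below: "h (Max ms) \<le> bb"
    unfolding h_def sum_c[symmetric]
  proof (rule sum_mono)
    fix j assume j: "j \<in> K"
    then have "- dphi j c / a j \<le> Max ms" "0 < a j"
      using ms K a_pos unfolding ms_def by auto
    then have "- Max ms * a j \<le> dphi j c"
      using pos_divide_le_eq[of "a j" "- dphi j c" "Max ms"] by simp
    then have "stationary_point j (Max ms) \<le> c"
      using stationary_point_le_iff j K by blast
    then show "a j * stationary_point j (Max ms) \<le> a j * c"
      using \<open>0 < a j\<close> by simp
  qed
  have above: "bb \<le> h (Min ms)"
    unfolding h_def sum_c[symmetric]
  proof (rule sum_mono)
    fix j assume j: "j \<in> K"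
    then have "Min ms \<le> - dphi j c / a j" "0 < a j"
      using ms K a_pos unfolding ms_def by auto
    then have "dphi j c \<le> - Min ms * a j"
      using pos_le_divide_eq[of "a j" "Min ms" "- dphi j c"] by simp
    then have "c \<le> stationary_point j (Min ms)"
      using le_stationary_point_iff j K by blast
    then show "a j * c \<le> a j * stationary_point j (Min ms)"
      using \<open>0 < a j\<close> by simp
  qed
  have "isCont h m" for m
    unfolding h_def using K by (intro continuous_intros isCont_stationary_point) auto
  then show ?thesis
    using IVT2[of h "Max ms" bb "Min ms"] below above ms
    unfolding h_def by auto
qed

lemma pir_mu_eq:
  assumes K: "K \<subseteq> J" "K \<noteq> {}" and sol: "(\<Sum>j\<in>K. a j * stationary_point j m) = bb"
  shows "pir_mu dphi a K bb = m"
  unfolding pir_mu_def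
proof (rule the_equality)
  show "\<exists>x. (\<forall>j\<in>K. dphi j (x j) + m * a j = 0) \<and> (\<Sum>j\<in>K. a j * x j) = bb"
    using sol K dphi_stationary_point by (intro exI[of _ "\<lambda>j. stationary_point j m"]) auto
next
  fix m'
  assume "\<exists>x. (\<forall>j\<in>K. dphi j (x j) + m' * a j = 0) \<and> (\<Sum>j\<in>K. a j * x j) = bb"
  then obtain x where x: "\<forall>j\<in>K. dphi j (x j) + m' * a j = 0" "(\<Sum>j\<in>K. a j * x j) = bb"
    by blast
  have "(\<Sum>j\<in>K. a j * stationary_point j m') = (\<Sum>j\<in>K. a j * x j)"
    using K x(1) stationary_point_unique by (intro sum.cong) (auto simp: subset_iff)
  then have sol': "(\<Sum>j\<in>K. a j * stationary_point j m') = bb"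
    using x(2) by simp
  have "\<not> m < m'" "\<not> m' < m"
    using weighted_stationary_sum_strict_antimono[OF K, of m m']
      weighted_stationary_sum_strict_antimono[OF K, of m' m]
    unfolding sol sol' by auto
  then show "m' = m"
    by linarith
qed

lemma weighted_stationary_sum_pir_mu:
  "K \<subseteq> J \<Longrightarrow> K \<noteq> {} \<Longrightarrow> (\<Sum>j\<in>K. a j * stationary_point j (pir_mu dphi a K bb)) = bb"
  using weighted_stationary_sum_surj pir_mu_eq by metis

lemma pir_xhat_eq: "j \<in> J \<Longrightarrow> pir_xhat dphi a K bb j = stationary_point j (pir_mu dphi a K bb)"
  unfolding pir_xhat_def
  by (rule the_equality) (simp_all add: dphi_stationary_point stationary_point_unique)

definition clamped_sum :: "nat set \<Rightarrow> real \<Rightarrow> real" where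
  "clamped_sum K m = (\<Sum>j\<in>K. a j * max (l j) (min (u j) (stationary_point j m)))"

lemma clamped_sum_antimono:
  assumes "K \<subseteq> J" and "m \<le> m'"
  shows "clamped_sum K m' \<le> clamped_sum K m"
  unfolding clamped_sum_def
proof (rule sum_mono)
  fix j assume "j \<in> K"
  then have "j \<in> J" using assms(1) by blast
  then show "a j * max (l j) (min (u j) (stationary_point j m'))
      \<le> a j * max (l j) (min (u j) (stationary_point j m))"
    using a_pos[OF \<open>j \<in> J\<close>] stationary_point_antimono[OF \<open>j \<in> J\<close> assms(2)]
    by (intro mult_left_mono) (auto simp: max_def min_def)
qed

lemma clamped_sum_pir_mu:
  assumes K: "K \<subseteq> J" "K \<noteq> {}"
  shows "clamped_sum K (pir_mu dphi a K bb) = bb + pir_nabla dphi a l K bb - pir_Delta dphi a u K bb"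
proof -
  have fin: "finite K" using finite_subset[OF K(1) finite_J] .
  define x where "x j = stationary_point j (pir_mu dphi a K bb)" for j
  have xhat: "pir_xhat dphi a K bb j = x j" if "j \<in> K" for j
    using that K pir_xhat_eq unfolding x_def by blast
  have "clamped_sum K (pir_mu dphi a K bb) = (\<Sum>j\<in>K. a j * x j
      + (if x j \<le> l j then a j * (l j - x j) else 0) - (if u j \<le> x j then a j * (x j - u j) else 0))"
    unfolding clamped_sum_def x_def[symmetric]
  proof (rule sum.cong[OF refl])
    fix j assume "j \<in> K"
    then have "l j < u j" using K l_less_u by blast
    then show "a j * max (l j) (min (u j) (x j)) = a j * x j
        + (if x j \<le> l j then a j * (l j - x j) else 0) - (if u j \<le> x j then a j * (x j - u j) else 0)"
      by (auto simp: algebra_simps max_def min_def)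
  qed
  also have "\<dots> = (\<Sum>j\<in>K. a j * x j) + (\<Sum>j\<in>K. if x j \<le> l j then a j * (l j - x j) else 0)
      - (\<Sum>j\<in>K. if u j \<le> x j then a j * (x j - u j) else 0)"
    by (simp add: sum.distrib sum_subtractf)
  also have "(\<Sum>j\<in>K. a j * x j) = bb"
    unfolding x_def using weighted_stationary_sum_pir_mu[OF K] .
  also have "(\<Sum>j\<in>K. if x j \<le> l j then a j * (l j - x j) else 0) = pir_nabla dphi a l K bb"
    unfolding pir_nabla_def pir_L_def using fin by (simp add: sum.inter_filter xhat cong: conj_cong)
  also have "(\<Sum>j\<in>K. if u j \<le> x j then a j * (x j - u j) else 0) = pir_Delta dphi a u K bb"
    unfolding pir_Delta_def pir_U_def using fin by (simp add: sum.inter_filter xhat cong: conj_cong)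
  finally show ?thesis .
qed

lemma clamped_sum_remove_lower:
  assumes "K \<subseteq> J" "S \<subseteq> K" and "\<And>j. j \<in> S \<Longrightarrow> stationary_point j m \<le> l j"
  shows "clamped_sum K m = clamped_sum (K - S) m + (\<Sum>j\<in>S. a j * l j)"
proof -
  have S_sum: "(\<Sum>j\<in>S. a j * max (l j) (min (u j) (stationary_point j m))) = (\<Sum>j\<in>S. a j * l j)"
  proof (rule sum.cong[OF refl])
    fix j assume "j \<in> S"
    then have "l j < u j" "stationary_point j m \<le> l j"
      using assms l_less_u by auto
    then show "a j * max (l j) (min (u j) (stationary_point j m)) = a j * l j"
      by (simp add: max_def min_def)
  qed
  have "finite K"
    using assms(1) finite_J by (rule finite_subset)
  show ?thesis
    unfolding clamped_sum_def sum.subset_diff[OF assms(2) \<open>finite K\<close>] S_sum by simp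
qed

lemma clamped_sum_remove_upper:
  assumes "K \<subseteq> J" "S \<subseteq> K" and "\<And>j. j \<in> S \<Longrightarrow> u j \<le> stationary_point j m"
  shows "clamped_sum K m = clamped_sum (K - S) m + (\<Sum>j\<in>S. a j * u j)"
proof -
  have S_sum: "(\<Sum>j\<in>S. a j * max (l j) (min (u j) (stationary_point j m))) = (\<Sum>j\<in>S. a j * u j)"
  proof (rule sum.cong[OF refl])
    fix j assume "j \<in> S"
    then have "l j < u j" "u j \<le> stationary_point j m"
      using assms l_less_u by auto
    then show "a j * max (l j) (min (u j) (stationary_point j m)) = a j * u j"
      by (simp add: max_def min_def)
  qed
  have "finite K"
    using assms(1) finite_J by (rule finite_subset)
  show ?thesis
    unfolding clamped_sum_def sum.subset_diff[OF assms(2) \<open>finite K\<close>] S_sum by simp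
qed

lemma pir_mu_less_if_lower_step:
  assumes K: "K \<subseteq> J" "K \<noteq> {}"
    and step: "pir_Delta dphi a u K bb < pir_nabla dphi a l K bb"
    and reduced: "clamped_sum (K - pir_L dphi a l K bb) M = bb - (\<Sum>j\<in>pir_L dphi a l K bb. a j * l j)"
  shows "pir_mu dphi a K bb < M" and "clamped_sum K M = bb"
proof -
  define \<mu> where "\<mu> = pir_mu dphi a K bb"
  define Ls where "Ls = pir_L dphi a l K bb"
  have Ls: "Ls \<subseteq> K" unfolding Ls_def pir_L_def by auto
  have at_lower: "stationary_point j \<mu> \<le> l j" if "j \<in> Ls" for j
    using that K pir_xhat_eq unfolding Ls_def pir_L_def \<mu>_def by auto
  have "clamped_sum (K - Ls) \<mu> + (\<Sum>j\<in>Ls. a j * l j) > bb"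
    using clamped_sum_remove_lower[OF K(1) Ls at_lower] clamped_sum_pir_mu[OF K] step
    unfolding \<mu>_def Ls_def by simp
  then have "clamped_sum (K - Ls) M < clamped_sum (K - Ls) \<mu>"
    using reduced unfolding Ls_def by simp
  then show less: "pir_mu dphi a K bb < M"
    using clamped_sum_antimono[of "K - Ls" M \<mu>] K unfolding \<mu>_def by force
  have "stationary_point j M \<le> l j" if "j \<in> Ls" for j
    using stationary_point_antimono[of j \<mu> M] at_lower[OF that] that Ls K less
    unfolding \<mu>_def by force
  then show "clamped_sum K M = bb"
    using clamped_sum_remove_lower[OF K(1) Ls] reduced unfolding Ls_def by simp
qed

lemma pir_mu_greater_if_upper_step:
  assumes K: "K \<subseteq> J" "K \<noteq> {}"
    and step: "pir_nabla dphi a l K bb < pir_Delta dphi a u K bb"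
    and reduced: "clamped_sum (K - pir_U dphi a u K bb) M = bb - (\<Sum>j\<in>pir_U dphi a u K bb. a j * u j)"
  shows "M < pir_mu dphi a K bb" and "clamped_sum K M = bb"
proof -
  define \<mu> where "\<mu> = pir_mu dphi a K bb"
  define Us where "Us = pir_U dphi a u K bb"
  have Us: "Us \<subseteq> K" unfolding Us_def pir_U_def by auto
  have at_upper: "u j \<le> stationary_point j \<mu>" if "j \<in> Us" for j
    using that K pir_xhat_eq unfolding Us_def pir_U_def \<mu>_def by auto
  have "clamped_sum (K - Us) \<mu> + (\<Sum>j\<in>Us. a j * u j) < bb"
    using clamped_sum_remove_upper[OF K(1) Us at_upper] clamped_sum_pir_mu[OF K] step
    unfolding \<mu>_def Us_def by simp
  then have "clamped_sum (K - Us) \<mu> < clamped_sum (K - Us) M"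
    using reduced unfolding Us_def by simp
  then show less: "M < pir_mu dphi a K bb"
    using clamped_sum_antimono[of "K - Us" \<mu> M] K unfolding \<mu>_def by force
  have "u j \<le> stationary_point j M" if "j \<in> Us" for j
    using stationary_point_antimono[of j M \<mu>] at_upper[OF that] that Us K less
    unfolding \<mu>_def by force
  then show "clamped_sum K M = bb"
    using clamped_sum_remove_upper[OF K(1) Us] reduced unfolding Us_def by simp
qed

lemma lower_multiplier_nonneg:
  assumes "j \<in> pir_L dphi a l K bb" "K \<subseteq> J" "pir_mu dphi a K bb \<le> m"
  shows "0 \<le> dphi j (l j) + m * a j"
proof -
  have j: "j \<in> J" using assms(1,2) unfolding pir_L_def by auto
  have "- pir_mu dphi a K bb * a j \<le> dphi j (l j)"
    using assms(1) stationary_point_le_iff[OF j] pir_xhat_eq[OF j] unfolding pir_L_def by auto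
  moreover have "pir_mu dphi a K bb * a j \<le> m * a j"
    using assms(3) a_pos[OF j] by (simp add: mult_right_mono)
  ultimately show ?thesis by simp
qed

lemma upper_multiplier_nonneg:
  assumes "j \<in> pir_U dphi a u K bb" "K \<subseteq> J" "m \<le> pir_mu dphi a K bb"
  shows "0 \<le> - dphi j (u j) - m * a j"
proof -
  have j: "j \<in> J" using assms(1,2) unfolding pir_U_def by auto
  have "dphi j (u j) \<le> - pir_mu dphi a K bb * a j"
    using assms(1) le_stationary_point_iff[OF j] pir_xhat_eq[OF j] unfolding pir_U_def by auto
  moreover have "m * a j \<le> pir_mu dphi a K bb * a j"
    using assms(3) a_pos[OF j] by (simp add: mult_right_mono)
  ultimately show ?thesis by simp
qed

abbreviation J_at :: "nat \<Rightarrow> nat set" where "J_at k \<equiv> fst (pir_state dphi a l u J b k)"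
abbreviation b_at :: "nat \<Rightarrow> real" where "b_at k \<equiv> snd (pir_state dphi a l u J b k)"
abbreviation mu_at :: "nat \<Rightarrow> real" where "mu_at k \<equiv> pir_mu dphi a (J_at k) (b_at k)"
abbreviation L_at :: "nat \<Rightarrow> nat set" where "L_at k \<equiv> pir_L dphi a l (J_at k) (b_at k)"
abbreviation U_at :: "nat \<Rightarrow> nat set" where "U_at k \<equiv> pir_U dphi a u (J_at k) (b_at k)"
abbreviation nabla_at :: "nat \<Rightarrow> real" where "nabla_at k \<equiv> pir_nabla dphi a l (J_at k) (b_at k)"
abbreviation Delta_at :: "nat \<Rightarrow> real" where "Delta_at k \<equiv> pir_Delta dphi a u (J_at k) (b_at k)"

lemma J_at_subset: "J_at k \<subseteq> J"
proof (induction k)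
  case (Suc k)
  have "J_at (Suc k) \<subseteq> J_at k"
    by (auto simp: Let_def split_beta)
  with Suc show ?case by blast
qed simp

lemma pir_state_Suc_lower:
  assumes "J_at k \<noteq> {}" "Delta_at k < nabla_at k"
  shows "J_at (Suc k) = J_at k - L_at k" "b_at (Suc k) = b_at k - (\<Sum>j\<in>L_at k. a j * l j)"
  using assms by (simp_all add: Let_def split_beta)

lemma pir_state_Suc_upper:
  assumes "J_at k \<noteq> {}" "nabla_at k < Delta_at k"
  shows "J_at (Suc k) = J_at k - U_at k" "b_at (Suc k) = b_at k - (\<Sum>j\<in>U_at k. a j * u j)"
  using assms by (simp_all add: Let_def split_beta)

end

locale pir2_run = pir2_problem +
  fixes kstar :: nat
  assumes running: "\<And>k. k < kstar \<Longrightarrow> J_at k \<noteq> {} \<and> nabla_at k \<noteq> Delta_at k"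
    and stop_nonempty: "J_at kstar \<noteq> {}"
    and stop_balanced: "Delta_at kstar = nabla_at kstar"
begin

lemma J_at_nonempty: "k \<le> kstar \<Longrightarrow> J_at k \<noteq> {}"
  using running stop_nonempty by (cases "k = kstar") auto

lemma clamped_sum_final_mu: "k \<le> kstar \<Longrightarrow> clamped_sum (J_at k) (mu_at kstar) = b_at k"
proof (induction k rule: inc_induct)
  case base
  show ?case
    using clamped_sum_pir_mu[OF J_at_subset stop_nonempty] stop_balanced by simp
next
  case (step k)
  then have "J_at k \<noteq> {}" "nabla_at k \<noteq> Delta_at k"
    using running by auto
  then consider "Delta_at k < nabla_at k" | "nabla_at k < Delta_at k"
    by linarith
  then show ?case
  proof cases
    case 1
    then show ?thesis
      using pir_mu_less_if_lower_step(2)[OF J_at_subset \<open>J_at k \<noteq> {}\<close> 1]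
        step.IH pir_state_Suc_lower[OF \<open>J_at k \<noteq> {}\<close> 1] by simp
  next
    case 2
    then show ?thesis
      using pir_mu_greater_if_upper_step(2)[OF J_at_subset \<open>J_at k \<noteq> {}\<close> 2]
        step.IH pir_state_Suc_upper[OF \<open>J_at k \<noteq> {}\<close> 2] by simp
  qed
qed

lemma mu_at_less_final:
  assumes "k < kstar" "Delta_at k < nabla_at k"
  shows "mu_at k < mu_at kstar"
  using pir_mu_less_if_lower_step(1)[OF J_at_subset J_at_nonempty assms(2)]
    clamped_sum_final_mu[of "Suc k"] pir_state_Suc_lower[OF J_at_nonempty assms(2)] assms(1)
  by simp

lemma final_less_mu_at:
  assumes "k < kstar" "nabla_at k < Delta_at k"
  shows "mu_at kstar < mu_at k"
  using pir_mu_greater_if_upper_step(1)[OF J_at_subset J_at_nonempty assms(2)]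
    clamped_sum_final_mu[of "Suc k"] pir_state_Suc_upper[OF J_at_nonempty assms(2)] assms(1)
  by simp

lemma lower_multiplier_final_nonneg:
  assumes "j \<in> (\<Union>k\<in>{k. k < kstar \<and> Delta_at k < nabla_at k}. L_at k) \<union> L_at kstar"
  shows "0 \<le> dphi j (l j) + mu_at kstar * a j"
  using assms lower_multiplier_nonneg[OF _ J_at_subset] mu_at_less_final
  by (fastforce intro: less_imp_le)

lemma upper_multiplier_final_nonneg:
  assumes "j \<in> (\<Union>k\<in>{k. k < kstar \<and> nabla_at k < Delta_at k}. U_at k) \<union> U_at kstar"
  shows "0 \<le> - dphi j (u j) - mu_at kstar * a j"
  using assms upper_multiplier_nonneg[OF _ J_at_subset] final_less_mu_at
  by (fastforce intro: less_imp_le)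

end

theorem proposition6:
  fixes n :: nat and phi dphi :: "nat \<Rightarrow> real \<Rightarrow> real"
    and a l u :: "nat \<Rightarrow> real" and b :: real and kstar :: nat
  defines "J \<equiv> {1..n}"
  defines "Jk \<equiv> (\<lambda>k. fst (pir_state dphi a l u J b k))"
  defines "bk \<equiv> (\<lambda>k. snd (pir_state dphi a l u J b k))"
  defines "Lk \<equiv> (\<lambda>k. pir_L dphi a l (Jk k) (bk k))"
  defines "Uk \<equiv> (\<lambda>k. pir_U dphi a u (Jk k) (bk k))"
  defines "nab \<equiv> (\<lambda>k. pir_nabla dphi a l (Jk k) (bk k))"
  defines "Del \<equiv> (\<lambda>k. pir_Delta dphi a u (Jk k) (bk k))"
  defines "L \<equiv> (\<Union>k\<in>{k. k < kstar \<and> nab k > Del k}. Lk k) \<union> Lk kstar"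
  defines "U \<equiv> (\<Union>k\<in>{k. k < kstar \<and> nab k < Del k}. Uk k) \<union> Uk kstar"
  defines "mu \<equiv> pir_mu dphi a (Jk kstar) (bk kstar)"
  assumes sconv: "\<And>j. j \<in> J \<Longrightarrow> strictly_convex (phi j)"
    and deriv: "\<And>j x. j \<in> J \<Longrightarrow> (phi j has_real_derivative dphi j x) (at x)"
    and cont: "\<And>j. j \<in> J \<Longrightarrow> continuous_on UNIV (dphi j)"
    and bij: "\<And>j. j \<in> J \<Longrightarrow> bij (dphi j)"
    and apos: "\<And>j. j \<in> J \<Longrightarrow> a j > 0"
    and lu: "\<And>j. j \<in> J \<Longrightarrow> l j < u j"
    and opt: "\<exists>x. (\<Sum>j\<in>J. a j * x j) = b \<and> (\<forall>j\<in>J. l j \<le> x j \<and> x j \<le> u j) \<and>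
               (\<forall>y. (\<Sum>j\<in>J. a j * y j) = b \<and> (\<forall>j\<in>J. l j \<le> y j \<and> y j \<le> u j) \<longrightarrow>
                    (\<Sum>j\<in>J. phi j (x j)) \<le> (\<Sum>j\<in>J. phi j (y j)))"
    and notstop: "\<And>k. k < kstar \<Longrightarrow> Jk k \<noteq> {} \<and> nab k \<noteq> Del k"
    and stop_ne: "Jk kstar \<noteq> {}"
    and stop_eq: "Del kstar = nab kstar"
  shows "\<forall>j\<in>J. (if j \<in> L then dphi j (l j) + mu * a j else 0) \<ge> 0
              \<and> (if j \<in> U then - dphi j (u j) - mu * a j else 0) \<ge> 0"
proof -
  have "pir2_problem dphi a l u J"
  proof
    show "finite J" by (simp add: J_def)
  next
    fix j assume j: "j \<in> J"
    show "strict_mono (dphi j)"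
      using strictly_convex_imp_strict_mono_deriv[OF sconv[OF j] deriv[OF j] bij_is_inj[OF bij[OF j]]] .
  qed (use apos lu cont bij_is_surj[OF bij] in auto)
  then interpret pir2_run dphi a l u J b kstar
    using notstop stop_ne stop_eq
    unfolding pir2_run_def pir2_run_axioms_def Jk_def bk_def nab_def Del_def by blast
  show ?thesis
    using lower_multiplier_final_nonneg upper_multiplier_final_nonneg
    unfolding L_def U_def mu_def Lk_def Uk_def nab_def Del_def Jk_def bk_def by auto
qed

end
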